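(* Let $m\ge3$ be a fixed integer and let $S$ be a monoid such that (i) $S$ satisfies $x^{m-2}\,y_1\cdots y_n\,x\,y_n\cdots y_1\,x\approx x^{m-1}\,y_1\cdots y_n\,x\,y_n\cdots y_1\,x$ for each $n>1$; (ii) the words $xyyx$ and $x^{m-1}$ are isoterms for $S$; (iii) the word $x^{m-2}t_1xt_2x$ is an isoterm for $S$; (iv) if $S$ satisfies an identity $\mathbf u\approx x^{m-2}yxyx$ where $x$ occurs exactly $m$ times in $\mathbf u$, then $\mathbf u=x^{m-2}yxyx$. Then $S$ is non-finitely based.
   Context: All letters denote distinct variables of a countably infinite alphabet; words are elements of the free semigroup on it. A monoid $S$ satisfies an identity $\mathbf u\approx\mathbf v$ if both sides are equal under every evaluation of the variables in $S$. A word $\mathbf w$ is an isoterm for $S$ if $S$ satisfies no identity $\mathbf w\approx\mathbf w'$ with $\mathbf w'\ne\mathbf w$. $S$ is finitely based if all its identities are derivable from a finite subset of them; otherwise non-finitely based. *)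

theory Defs
  imports Main
begin

text \<open>Variables are natural numbers (a countably infinite alphabet).
  A word is a nonempty list of variables (element of the free semigroup).\<close>

type_synonym word = "nat list"

definition is_word :: "word \<Rightarrow> bool" where
  "is_word w \<longleftrightarrow> w \<noteq> []"

definition eval_word :: "(nat \<Rightarrow> 'a::monoid_mult) \<Rightarrow> nat list \<Rightarrow> 'a" where
  "eval_word \<phi> w = prod_list (map \<phi> w)"

definition satisfies :: "'a::monoid_mult itself \<Rightarrow> nat list \<Rightarrow> nat list \<Rightarrow> bool" where
  "satisfies S u v \<longleftrightarrow> (\<forall>\<phi> :: nat \<Rightarrow> 'a. eval_word \<phi> u = eval_word \<phi> v)"

definition isoterm :: "'a::monoid_mult itself \<Rightarrow> word \<Rightarrow> bool" where
  "isoterm S w \<longleftrightarrow> (\<forall>w'. is_word w' \<longrightarrow> satisfies S w w' \<longrightarrow> w' = w)"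

text \<open>Substitution of (possibly empty) words for variables (monoid signature).\<close>
definition subst :: "(nat \<Rightarrow> nat list) \<Rightarrow> nat list \<Rightarrow> nat list" where
  "subst \<sigma> w = concat (map \<sigma> w)"

inductive derivable :: "(nat list \<times> nat list) set \<Rightarrow> nat list \<Rightarrow> nat list \<Rightarrow> bool"
  for \<Sigma> where
  refl: "derivable \<Sigma> u u"
| sym: "derivable \<Sigma> u v \<Longrightarrow> derivable \<Sigma> v u"
| trans: "derivable \<Sigma> u v \<Longrightarrow> derivable \<Sigma> v w \<Longrightarrow> derivable \<Sigma> u w"
| step: "(s, t) \<in> \<Sigma> \<Longrightarrow> derivable \<Sigma> (a @ subst \<sigma> s @ b) (a @ subst \<sigma> t @ b)"

definition finitely_based :: "'a::monoid_mult itself \<Rightarrow> bool" where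
  "finitely_based S \<longleftrightarrow>
     (\<exists>\<Sigma>. finite \<Sigma> \<and> (\<forall>(u, v) \<in> \<Sigma>. satisfies S u v) \<and>
          (\<forall>u v. is_word u \<longrightarrow> is_word v \<longrightarrow> satisfies S u v \<longrightarrow> derivable \<Sigma> u v))"

text \<open>Fixed distinct letters: x = 0, y = 1, t1 = 1, t2 = 2, y_i = i (i \<ge> 1).\<close>

definition word_i :: "nat \<Rightarrow> nat \<Rightarrow> word" where
  "word_i k n = replicate k 0 @ [1..<n+1] @ [0] @ rev [1..<n+1] @ [0]"

end

theory Submission
  imports Defs
begin

text \<open>Write \<open>w\<^sub>n = x\<^sup>m\<^sup>-\<^sup>2 y\<^sub>1\<cdots>y\<^sub>n x y\<^sub>n\<cdots>y\<^sub>1 x\<close>. If a finite basis existed, choose \<open>n\<close> larger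
  than the number of variables of each of its identities. Then no basis identity \<open>s \<approx> t\<close> can be
  applied to \<open>w\<^sub>n\<close> nontrivially, so \<open>w\<^sub>n \<approx> x w\<^sub>n\<close>, which holds by (i), would not be derivable.

  Applying \<open>s \<approx> t\<close> to \<open>w\<^sub>n\<close> preserves the number \<open>m\<close> of occurrences of \<open>x\<close>: a variable of \<open>s\<close>
  occurring at most \<open>m - 1\<close> times keeps its count in \<open>t\<close> because \<open>x\<^sup>m\<^sup>-\<^sup>1\<close> is an isoterm. Otherwise a single
  variable \<open>z\<close> carries all \<open>m\<close> occurrences of \<open>x\<close>, and since \<open>s\<close> has fewer than \<open>n\<close> variables, the blocks
  \<open>y\<^sub>1\<cdots>y\<^sub>n\<close> and \<open>y\<^sub>n\<cdots>y\<^sub>1\<close> contain variables \<open>p\<close>, \<open>q\<close> with values of length at least 2, necessarily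
  distinct; collapsing \<open>s\<close> onto \<open>z \<mapsto> x, p \<mapsto> t\<^sub>1, q \<mapsto> t\<^sub>2\<close> gives the isoterm \<open>x\<^sup>m\<^sup>-\<^sup>2 t\<^sub>1 x t\<^sub>2 x\<close> of
  (iii), which forces \<open>z\<close> to occur \<open>m\<close> times in \<open>t\<close> as well. Finally, a word with \<open>m\<close> occurrences of
  \<open>x\<close> equal to \<open>w\<^sub>n\<close> in \<open>S\<close> coincides with \<open>w\<^sub>n\<close>: its projections onto two letters are fixed by (ii)
  and (iv), and these projections determine a word.\<close>

lemma eval_word_append [simp]: "eval_word \<phi> (u @ v) = eval_word \<phi> u * eval_word \<phi> v"
  by (simp add: eval_word_def)

lemma subst_Nil [simp]: "subst \<sigma> [] = []"
  by (simp add: subst_def)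

lemma subst_Cons [simp]: "subst \<sigma> (v # u) = \<sigma> v @ subst \<sigma> u"
  by (simp add: subst_def)

lemma subst_append [simp]: "subst \<sigma> (u @ w) = subst \<sigma> u @ subst \<sigma> w"
  by (simp add: subst_def)

lemma eval_word_subst: "eval_word \<phi> (subst \<sigma> u) = eval_word (\<lambda>v. eval_word \<phi> (\<sigma> v)) u"
  by (induction u) (simp_all add: eval_word_def)

lemma subst_singletons: "subst (\<lambda>v. [f v]) u = map f u"
  by (induction u) simp_all

lemma subst_filter: "subst (\<lambda>v. if P v then [v] else []) u = filter P u"
  by (induction u) simp_all

lemma set_subst: "set (subst \<sigma> u) = (\<Union>v\<in>set u. set (\<sigma> v))"
  by (simp add: subst_def)

lemma set_subst_subset: "v \<in> set u \<Longrightarrow> set (\<sigma> v) \<subseteq> set (subst \<sigma> u)"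
  by (auto simp: set_subst)

lemma factor_of_subst: "v \<in> set u \<Longrightarrow> \<exists>L R. subst \<sigma> u = L @ \<sigma> v @ R"
  by (metis split_list subst_Cons subst_append)

lemma subst_eq_concat_replicate:
  assumes "\<forall>v\<in>set u. v \<noteq> z \<longrightarrow> \<sigma> v = []"
  shows "subst \<sigma> u = concat (replicate (count_list u z) (\<sigma> z))"
  using assms by (induction u) auto

lemma count_list_subst:
  "count_list (subst \<sigma> u) c = (\<Sum>v\<in>set u. count_list u v * count_list (\<sigma> v) c)"
  by (simp add: subst_def count_list_concat sum_list_map_eq_sum_count comp_def)

lemma count_list_subst_ge:
  "v \<in> set u \<Longrightarrow> count_list u v * count_list (\<sigma> v) c \<le> count_list (subst \<sigma> u) c"
  unfolding count_list_subst by (rule member_le_sum) auto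

lemma count_list_subst_sole_carrier:
  assumes "\<forall>v\<in>set u. v \<noteq> z \<longrightarrow> x \<notin> set (\<sigma> v)" and "\<sigma> z = [x]"
  shows "count_list (subst \<sigma> u) x = count_list u z"
  using assms by (induction u) auto

lemma count_list_replicate [simp]: "count_list (replicate k a) b = (if a = b then k else 0)"
  by (induction k) auto

lemma count_list_distinct: "distinct xs \<Longrightarrow> count_list xs x = (if x \<in> set xs then 1 else 0)"
  by (induction xs) auto

lemma count_list_filter: "P c \<Longrightarrow> count_list (filter P xs) c = count_list xs c"
  by (induction xs) auto

lemma filter_eq_replicate: "filter (\<lambda>x. x = c) xs = replicate (count_list xs c) c"
  by (induction xs) auto

lemma append_Cons_eq_append_Cons_last:
  assumes "x \<notin> set ys" and "x \<notin> set ys'" and "xs @ x # ys = xs' @ x # ys'"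
  shows "xs = xs'" and "ys = ys'"
proof -
  have tw: "takeWhile (\<lambda>y. y \<noteq> x) (rev (as @ x # bs)) = rev bs" if "x \<notin> set bs" for as bs
    using that takeWhile_append2[of "rev bs" "\<lambda>y. y \<noteq> x" "x # rev as"] by auto
  have "rev ys = takeWhile (\<lambda>y. y \<noteq> x) (rev (xs @ x # ys))"
    using tw assms(1) by simp
  also have "\<dots> = rev ys'"
    using tw assms(2,3) by simp
  finally show "ys = ys'" by simp
  then show "xs = xs'" using assms(3) by simp
qed

lemma sorted_wrt_less_rev_common_factor:
  fixes xs :: "'a::order list"
  assumes "sorted_wrt (<) xs" and "xs = L1 @ U @ R1" and "rev xs = L2 @ U @ R2"
  shows "length U \<le> 1"
proof (rule ccontr)
  assume "\<not> length U \<le> 1"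
  then obtain a b U' where U: "U = a # b # U'"
    by (cases U; cases "tl U") auto
  have "sorted_wrt (<) (L1 @ a # b # U' @ R1)"
    using assms(1,2) U by simp
  then have "a < b"
    by (simp add: sorted_wrt_append)
  have "sorted_wrt (\<lambda>x y. y < x) (rev xs)"
    using assms(1) by (simp add: sorted_wrt_rev)
  then have "sorted_wrt (\<lambda>x y. y < x) (L2 @ a # b # U' @ R2)"
    using assms(3) U by simp
  then have "b < a"
    by (simp add: sorted_wrt_append)
  with \<open>a < b\<close> show False by simp
qed

lemma list_eq_if_pair_filters_eq:
  "(\<And>c d. c \<in> set u \<union> set v \<Longrightarrow> d \<in> set u \<union> set v \<Longrightarrow>
      filter (\<lambda>x. x = c \<or> x = d) u = filter (\<lambda>x. x = c \<or> x = d) v) \<Longrightarrow> u = v"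
proof (induction u arbitrary: v)
  case Nil
  show ?case
  proof (cases v)
    case (Cons e v')
    then show ?thesis using Nil.prems[of e e] by simp
  qed simp
next
  case (Cons c u)
  show ?case
  proof (cases v)
    case Nil
    then show ?thesis using Cons.prems[of c c] by simp
  next
    case (Cons e v')
    have "c = e"
      using Cons.prems[of c e] \<open>v = e # v'\<close> by (auto split: if_splits)
    moreover have "u = v'"
    proof (rule Cons.IH)
      fix c' d' assume "c' \<in> set u \<union> set v'" "d' \<in> set u \<union> set v'"
      then show "filter (\<lambda>x. x = c' \<or> x = d') u = filter (\<lambda>x. x = c' \<or> x = d') v'"
        using Cons.prems[of c' d'] \<open>v = e # v'\<close> \<open>c = e\<close> by (auto split: if_splits)
    qed
    ultimately show ?thesis using \<open>v = e # v'\<close> by simp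
  qed
qed

lemma satisfies_sym: "satisfies S u v \<Longrightarrow> satisfies S v u"
  by (simp add: satisfies_def)

lemma satisfies_subst: "satisfies S u v \<Longrightarrow> satisfies S (subst \<sigma> u) (subst \<sigma> v)"
  by (simp add: satisfies_def eval_word_subst)

lemma satisfies_append: "satisfies S u v \<Longrightarrow> satisfies S (a @ u @ b) (a @ v @ b)"
  by (simp add: satisfies_def)

lemma satisfies_map: "satisfies S u v \<Longrightarrow> satisfies S (map f u) (map f v)"
  using satisfies_subst[of S u v "\<lambda>v. [f v]"] by (simp add: subst_singletons)

lemma satisfies_filter: "satisfies S u v \<Longrightarrow> satisfies S (filter P u) (filter P v)"
  using satisfies_subst[of S u v "\<lambda>v. if P v then [v] else []"] by (simp add: subst_filter)

lemma satisfies_count_list: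
  assumes "satisfies S u v"
  shows "satisfies S (replicate (count_list u c) x) (replicate (count_list v c) x)"
proof -
  have "satisfies S (map (\<lambda>_. x) (filter ((=) c) u)) (map (\<lambda>_. x) (filter ((=) c) v))"
    using assms by (intro satisfies_map satisfies_filter)
  then show ?thesis by (simp add: map_replicate_const count_list_eq_length_filter)
qed

lemma satisfies_Nil_imp_Nil:
  assumes pow: "isoterm S (replicate k x)" and sat: "satisfies S u []"
  shows "u = []"
proof (rule ccontr)
  assume "u \<noteq> []"
  then obtain c where "c \<in> set u" by (cases u) auto
  then have pos: "count_list u c > 0" by (metis count_list_0_iff gr0I)
  have "satisfies S (replicate (count_list u c) x) []"
    using satisfies_count_list[OF sat, of c x] by simp
  then have "satisfies S (replicate k x) (replicate k x @ replicate (count_list u c) x)"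
    using satisfies_append[of S _ "[]" "replicate k x" "[]"] satisfies_sym by fastforce
  moreover have "is_word (replicate k x @ replicate (count_list u c) x)"
    using pos by (simp add: is_word_def)
  ultimately have "replicate k x @ replicate (count_list u c) x = replicate k x"
    using pow unfolding isoterm_def by blast
  then show False
    using pos by (metis length_append length_replicate less_add_same_cancel1 less_irrefl)
qed

lemma satisfies_set_eq:
  assumes pow: "isoterm S (replicate k x)" and sat: "satisfies S u v"
  shows "set u = set v"
proof -
  have "set u' \<subseteq> set v'" if "satisfies S u' v'" for u' v'
  proof
    fix c assume "c \<in> set u'"
    moreover have "satisfies S (replicate (count_list u' c) x) []" if "c \<notin> set v'"
      using satisfies_count_list[OF \<open>satisfies S u' v'\<close>, of c x] that by simp
    ultimately show "c \<in> set v'"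
      using satisfies_Nil_imp_Nil[OF pow] by (metis count_list_0_iff replicate_empty)
  qed
  then show ?thesis using sat satisfies_sym by blast
qed

lemma satisfies_count_list_eq:
  assumes pow: "isoterm S (replicate k x)" and sat: "satisfies S u v"
    and le: "count_list u c \<le> k"
  shows "count_list v c = count_list u c"
proof -
  let ?i = "count_list u c" and ?j = "count_list v c"
  have "satisfies S (replicate (k - ?i) x @ replicate ?i x @ []) (replicate (k - ?i) x @ replicate ?j x @ [])"
    using satisfies_append[OF satisfies_count_list[OF sat]] by blast
  then have sat': "satisfies S (replicate k x) (replicate (k - ?i + ?j) x)"
    using le by (simp add: replicate_add[symmetric])
  show ?thesis
  proof (cases "k - ?i + ?j = 0")
    case True
    then show ?thesis
      using satisfies_Nil_imp_Nil[OF pow] sat' le by fastforce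
  next
    case False
    then have "is_word (replicate (k - ?i + ?j) x)" by (simp add: is_word_def)
    then have "replicate (k - ?i + ?j) x = replicate k x"
      using pow sat' unfolding isoterm_def by blast
    then have "k - ?i + ?j = k" by (metis length_replicate)
    then show ?thesis using le by linarith
  qed
qed

lemma satisfies_map_inv_into:
  assumes pow: "isoterm S (replicate k x)" and inj: "inj_on f (set w)"
    and sat: "satisfies S (map f w) u"
  defines "g \<equiv> inv_into (set w) f"
  shows "satisfies S w (map g u)" and "map f (map g u) = u" and "inj_on g (set u)"
proof -
  have "map g (map f w) = w"
    using inj by (simp add: g_def map_idI)
  then show "satisfies S w (map g u)"
    using satisfies_map[OF sat, of g] by simp
  have "set u = f ` set w"
    using satisfies_set_eq[OF pow sat] by simp
  then have fg: "f (g y) = y" if "y \<in> set u" for y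
    using that by (simp add: g_def f_inv_into_f)
  then show "map f (map g u) = u" by (simp add: map_idI)
  from fg show "inj_on g (set u)" by (rule inj_on_inverseI)
qed

lemma isoterm_map:
  assumes pow: "isoterm S (replicate k x)" and iso: "isoterm S w" and inj: "inj_on f (set w)"
  shows "isoterm S (map f w)"
  unfolding isoterm_def
proof (intro allI impI)
  fix u assume "is_word u" and sat: "satisfies S (map f w) u"
  note inv = satisfies_map_inv_into[OF pow inj sat]
  have "map (inv_into (set w) f) u = w"
    using iso inv(1) \<open>is_word u\<close> by (simp add: isoterm_def is_word_def)
  then show "u = map f w" using inv(2) by metis
qed

definition isoterm_with_count :: "'a::monoid_mult itself \<Rightarrow> nat \<Rightarrow> nat \<Rightarrow> word \<Rightarrow> bool" where
  "isoterm_with_count S x k w \<longleftrightarrow>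
     (\<forall>u. is_word u \<longrightarrow> satisfies S u w \<longrightarrow> count_list u x = k \<longrightarrow> u = w)"

lemma isoterm_with_count_map:
  assumes pow: "isoterm S (replicate k y)" and iso: "isoterm_with_count S x c w"
    and inj: "inj_on f (set w)" and x: "x \<in> set w"
  shows "isoterm_with_count S (f x) c (map f w)"
  unfolding isoterm_with_count_def
proof (intro allI impI)
  fix u assume "is_word u" and sat: "satisfies S u (map f w)" and cnt: "count_list u (f x) = c"
  note inv = satisfies_map_inv_into[OF pow inj satisfies_sym[OF sat]]
  let ?g = "inv_into (set w) f"
  have "f x \<in> set u"
    using satisfies_set_eq[OF pow sat] x by simp
  then have "count_list (map ?g u) x = c"
    using count_list_inj_map[OF inv(3)] cnt inj x by fastforce
  then have "map ?g u = w"
    using iso satisfies_sym[OF inv(1)] \<open>is_word u\<close> by (simp add: isoterm_with_count_def is_word_def)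
  then show "u = map f w" using inv(2) by metis
qed

lemma set_word_i: "set (word_i k n) = insert 0 {1..n}"
  by (auto simp: word_i_def)

lemma count_list_word_i_0: "count_list (word_i k n) 0 = k + 2"
  by (simp add: word_i_def)

lemma count_list_word_i_le_2: "y \<noteq> 0 \<Longrightarrow> count_list (word_i k n) y \<le> 2"
  by (simp del: upt_Suc add: word_i_def count_list_distinct)

lemma filter_word_i_0:
  assumes "1 \<le> i" "i \<le> n"
  shows "filter (\<lambda>x. x = 0 \<or> x = i) (word_i k n) = replicate k 0 @ [i, 0, i, 0]"
proof -
  have "filter (\<lambda>x. x = 0 \<or> x = i) [1..<n+1] = [i]"
    using assms sorted_wrt_filter[OF sorted_upt] by (intro sorted_distinct_set_unique) (auto simp del: upt_Suc)
  then show ?thesis by (simp add: word_i_def rev_filter[symmetric])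
qed

lemma filter_word_i_pair:
  assumes "1 \<le> i" "i < j" "j \<le> n"
  shows "filter (\<lambda>x. x = i \<or> x = j) (word_i k n) = [i, j, j, i]"
proof -
  have "filter (\<lambda>x. x = i \<or> x = j) [1..<n+1] = [i, j]"
    using assms sorted_wrt_filter[OF sorted_upt] by (intro sorted_distinct_set_unique) (auto simp del: upt_Suc)
  then show ?thesis using assms by (simp del: upt_Suc add: word_i_def rev_filter[symmetric])
qed

lemma subst_split_last:
  assumes free: "\<forall>v\<in>set s. v \<noteq> z \<longrightarrow> x \<notin> set (\<sigma> v)" and z: "\<sigma> z = [x]"
    and eq: "subst \<sigma> s = L @ x # R" and R: "x \<notin> set R"
  obtains A B where "s = A @ z # B" and "subst \<sigma> A = L" and "subst \<sigma> B = R"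
proof -
  have "x \<in> set (subst \<sigma> s)"
    using eq by simp
  then have "z \<in> set s"
    using free by (auto simp: set_subst)
  then obtain A B where s: "s = A @ z # B" and "z \<notin> set B"
    by (meson split_list_last)
  then have "x \<notin> set (subst \<sigma> B)"
    using free by (auto simp: set_subst)
  moreover have "subst \<sigma> A @ x # subst \<sigma> B = L @ x # R"
    using eq s z by simp
  ultimately show thesis
    using that s R append_Cons_eq_append_Cons_last by metis
qed

lemma word_i_preimage:
  assumes free: "\<forall>v\<in>set s. v \<noteq> z \<longrightarrow> 0 \<notin> set (\<sigma> v)" and z: "\<sigma> z = [0]"
    and eq: "subst \<sigma> s = word_i (Suc k) n"
  obtains P S1 S2 D where "s = P @ z # S1 @ z # S2 @ z # D"
    and "subst \<sigma> P = replicate k 0" and "subst \<sigma> S1 = [1..<n+1]"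
    and "subst \<sigma> S2 = rev [1..<n+1]" and "subst \<sigma> D = []"
proof -
  have no_0: "0 \<notin> set (rev [1..<n+1])" "0 \<notin> set [1..<n+1]" "(0::nat) \<notin> set []"
    by simp_all
  have "subst \<sigma> s = (replicate k 0 @ 0 # [1..<n+1] @ 0 # rev [1..<n+1]) @ 0 # []"
    using eq by (simp add: word_i_def replicate_append_same[symmetric])
  from subst_split_last[OF free z this no_0(3)]
  obtain A D where s: "s = A @ z # D"
    and A: "subst \<sigma> A = (replicate k 0 @ 0 # [1..<n+1]) @ 0 # rev [1..<n+1]"
    and D: "subst \<sigma> D = []"
    by auto
  have "\<forall>v\<in>set A. v \<noteq> z \<longrightarrow> 0 \<notin> set (\<sigma> v)"
    using free s by simp
  from subst_split_last[OF this z A no_0(1)]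
  obtain A' S2 where A': "A = A' @ z # S2"
    and A'_eq: "subst \<sigma> A' = replicate k 0 @ 0 # [1..<n+1]" and S2: "subst \<sigma> S2 = rev [1..<n+1]"
    by auto
  have "\<forall>v\<in>set A'. v \<noteq> z \<longrightarrow> 0 \<notin> set (\<sigma> v)"
    using free s A' by simp
  from subst_split_last[OF this z A'_eq no_0(2)]
  obtain P S1 where "A' = P @ z # S1"
    and "subst \<sigma> P = replicate k 0" and "subst \<sigma> S1 = [1..<n+1]"
    by auto
  then show thesis
    using that s A' S2 D by simp
qed

lemma word_i_eq_append_x_free:
  assumes eq: "a @ u @ b = word_i k n" and k: "k \<ge> 1"
    and a: "0 \<notin> set a" and b: "0 \<notin> set b"
  shows "a = [] \<and> b = []"
proof (intro conjI)
  have "hd (word_i k n) = 0"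
    using k by (cases k) (simp_all add: word_i_def)
  then show "a = []"
  proof (rule contrapos_pp)
    assume "a \<noteq> []"
    then have "hd (word_i k n) = hd a"
      using eq[symmetric] by simp
    then show "hd (word_i k n) \<noteq> 0"
      using a \<open>a \<noteq> []\<close> hd_in_set by metis
  qed
  have "last (word_i k n) = 0"
    by (simp add: word_i_def)
  then show "b = []"
  proof (rule contrapos_pp)
    assume "b \<noteq> []"
    then have "last (word_i k n) = last b"
      using eq[symmetric] by simp
    then show "last (word_i k n) \<noteq> 0"
      using b \<open>b \<noteq> []\<close> last_in_set by metis
  qed
qed

lemma set_image_subset_x_if_frequent:
  assumes eq: "a @ subst \<sigma> s @ b = word_i k n" and v: "v \<in> set s" and many: "count_list s v > 2"
  shows "set (\<sigma> v) \<subseteq> {0}"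
proof
  fix y assume y: "y \<in> set (\<sigma> v)"
  show "y \<in> {0}"
  proof (rule ccontr)
    assume "y \<notin> {0}"
    have "count_list (\<sigma> v) y \<noteq> 0"
      using y by (simp add: count_list_0_iff)
    then have "count_list s v \<le> count_list s v * count_list (\<sigma> v) y"
      by simp
    also have "\<dots> \<le> count_list (word_i k n) y"
      using count_list_subst_ge[OF v, of \<sigma> y] arg_cong[OF eq, of "\<lambda>w. count_list w y"] by simp
    also have "\<dots> \<le> 2"
      using \<open>y \<notin> {0}\<close> by (intro count_list_word_i_le_2) simp
    finally show False
      using many by simp
  qed
qed

lemma word_i_sole_x_variable:
  assumes eq: "a @ subst \<sigma> s @ b = word_i k n" and k: "k \<ge> 1"
    and many: "count_list s v \<ge> k + 2" and x: "0 \<in> set (\<sigma> v)"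
  shows "a = [] \<and> b = []" and "\<sigma> v = [0]" and "\<forall>u\<in>set s. u \<noteq> v \<longrightarrow> 0 \<notin> set (\<sigma> u)"
proof -
  let ?w = "word_i k n" and ?c = "\<lambda>u. count_list s u * count_list (\<sigma> u) 0"
  have v: "v \<in> set s"
    using many by (metis count_list_0_iff add_is_0 le_zero_eq zero_neq_numeral)
  have total: "count_list a 0 + count_list (subst \<sigma> s) 0 + count_list b 0 = k + 2"
    using arg_cong[OF eq, of "\<lambda>w. count_list w 0"] by (simp add: count_list_word_i_0)
  have split: "count_list (subst \<sigma> s) 0 = ?c v + (\<Sum>u\<in>set s - {v}. ?c u)"
    unfolding count_list_subst using v by (simp add: sum.remove)
  have x_pos: "count_list (\<sigma> v) 0 \<ge> 1"
    using x by (metis count_list_0_iff less_one not_le)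
  then have "?c v \<ge> count_list s v"
    by simp
  then have "count_list a 0 = 0" "count_list b 0 = 0" "(\<Sum>u\<in>set s - {v}. ?c u) = 0" "?c v = k + 2"
    using total split many by linarith+
  then show "\<forall>u\<in>set s. u \<noteq> v \<longrightarrow> 0 \<notin> set (\<sigma> u)"
    by (auto simp: count_list_0_iff)
  have "count_list (\<sigma> v) 0 = 1"
  proof (rule ccontr)
    assume "count_list (\<sigma> v) 0 \<noteq> 1"
    then have "?c v \<ge> count_list s v * 2"
      using x_pos by (intro mult_le_mono2) simp
    then show False
      using \<open>?c v = k + 2\<close> many by linarith
  qed
  moreover have "set (\<sigma> v) \<subseteq> {0}"
    using set_image_subset_x_if_frequent[OF eq v] many k by simp
  ultimately show "\<sigma> v = [0]"
    using filter_eq_replicate[of 0 "\<sigma> v"] filter_id_conv[of "\<lambda>y. y = 0" "\<sigma> v"] by auto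
  show "a = [] \<and> b = []"
    using word_i_eq_append_x_free[OF eq k] \<open>count_list a 0 = 0\<close> \<open>count_list b 0 = 0\<close>
    by (simp add: count_list_0_iff)
qed

lemma exists_long_image:
  assumes Y: "subst \<sigma> A = Y" and "distinct Y" and card: "card (set A) < length Y"
  obtains p where "p \<in> set A" and "length (\<sigma> p) \<ge> 2" and "count_list A p = 1"
proof -
  have "\<exists>p\<in>set A. length (\<sigma> p) \<ge> 2"
  proof (rule ccontr)
    assume "\<not> ?thesis"
    then have "length (\<sigma> v) \<le> 1" if "v \<in> set A" for v
      using that by force
    then have "card (set (\<sigma> v)) \<le> 1" if "v \<in> set A" for v
      using that card_length[of "\<sigma> v"] by (meson le_trans)
    then have "(\<Sum>v\<in>set A. card (set (\<sigma> v))) \<le> card (set A)"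
      using sum_mono[of "set A" "\<lambda>v. card (set (\<sigma> v))" "\<lambda>_. 1"] by simp
    moreover have "card (set Y) \<le> (\<Sum>v\<in>set A. card (set (\<sigma> v)))"
      unfolding Y[symmetric] set_subst by (rule card_UN_le) simp
    ultimately show False
      using card \<open>distinct Y\<close> by (simp add: distinct_card)
  qed
  then obtain p where p: "p \<in> set A" "length (\<sigma> p) \<ge> 2" ..
  obtain a where a: "a \<in> set (\<sigma> p)"
    using p(2) by (cases "\<sigma> p") auto
  have "count_list A p * count_list (\<sigma> p) a \<le> count_list Y a"
    using count_list_subst_ge[OF p(1)] Y by blast
  moreover have "count_list Y a = 1"
    using a p(1) Y \<open>distinct Y\<close> by (auto simp: count_list_distinct set_subst)
  moreover have "count_list (\<sigma> p) a \<noteq> 0"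
    using a by (simp add: count_list_0_iff)
  moreover have "count_list A p \<le> count_list A p * count_list (\<sigma> p) a"
    using \<open>count_list (\<sigma> p) a \<noteq> 0\<close> by simp
  ultimately have "count_list A p \<le> 1"
    by linarith
  moreover have "count_list A p \<noteq> 0"
    using p(1) by (simp add: count_list_0_iff)
  ultimately show thesis
    using that p by simp
qed

definition collapse :: "nat \<Rightarrow> nat \<Rightarrow> nat \<Rightarrow> nat \<Rightarrow> nat list" where
  "collapse z p q v = (if v = z then [0] else if v = p then [1] else if v = q then [2] else [])"

lemma count_list_subst_collapse: "count_list (subst (collapse z p q) u) 0 = count_list u z"
  by (induction u) (auto simp: collapse_def)

lemma subst_collapse_only:
  assumes "\<forall>v\<in>set u. v \<noteq> c \<longrightarrow> v \<notin> {z, p, q}"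
  shows "subst (collapse z p q) u = concat (replicate (count_list u c) (collapse z p q c))"
  using assms by (intro subst_eq_concat_replicate) (auto simp: collapse_def)

lemma subst_collapse_blocks:
  assumes "p \<notin> set P" "q \<notin> set P"
    and "z \<notin> set S1" "q \<notin> set S1" "count_list S1 p = 1"
    and "z \<notin> set S2" "p \<notin> set S2" "count_list S2 q = 1"
    and "z \<notin> set D" "p \<notin> set D" "q \<notin> set D"
  shows "subst (collapse z p q) (P @ z # S1 @ z # S2 @ z # D)
           = replicate (Suc (count_list P z)) 0 @ [1, 0, 2, 0]"
proof -
  have "p \<in> set S1" "q \<in> set S2"
    using assms(5,8) by (metis count_list_0_iff one_neq_zero)+
  then have "p \<noteq> z" "q \<noteq> z" "q \<noteq> p"
    using assms(3,6,7) by auto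
  moreover have "subst (collapse z p q) P = concat (replicate (count_list P z) (collapse z p q z))"
    using assms(1,2) by (intro subst_collapse_only) blast
  moreover have "subst (collapse z p q) S1 = concat (replicate (count_list S1 p) (collapse z p q p))"
    using assms(3,4) by (intro subst_collapse_only) blast
  moreover have "subst (collapse z p q) S2 = concat (replicate (count_list S2 q) (collapse z p q q))"
    using assms(6,7) by (intro subst_collapse_only) blast
  moreover have "subst (collapse z p q) D = concat (replicate (count_list D z) (collapse z p q z))"
    using assms(10,11) by (intro subst_collapse_only) blast
  ultimately show ?thesis
    using assms(5,8,9) by (simp add: collapse_def replicate_append_same[symmetric])
qed

lemma notin_if_disjoint_subst:
  "\<sigma> v \<noteq> [] \<Longrightarrow> set (\<sigma> v) \<inter> set (subst \<sigma> u) = {} \<Longrightarrow> v \<notin> set u"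
  using set_subst_subset[of v u \<sigma>] by (cases "\<sigma> v") auto

lemma shared_preimage_variable_length_le_1:
  assumes "subst \<sigma> S1 = [1..<n+1]" and "subst \<sigma> S2 = rev [1..<n+1]"
    and "v \<in> set S1" and "v \<in> set S2"
  shows "length (\<sigma> v) \<le> 1"
proof -
  obtain L1 R1 L2 R2 where "[1..<n+1] = L1 @ \<sigma> v @ R1" and "rev [1..<n+1] = L2 @ \<sigma> v @ R2"
    using factor_of_subst assms by metis
  then show ?thesis
    by (intro sorted_wrt_less_rev_common_factor[OF sorted_wrt_upt])
qed

text \<open>A factor of length 2 cannot occur in both \<open>y\<^sub>1\<cdots>y\<^sub>n\<close> and \<open>y\<^sub>n\<cdots>y\<^sub>1\<close>, so the long-valued
  variables found in the two blocks are distinct and each occurs in one block only.\<close>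

lemma collapse_word_i_preimage:
  assumes s: "s = P @ z # S1 @ z # S2 @ z # D" and card: "card (set s) < n"
    and P: "subst \<sigma> P = replicate k 0" and S1: "subst \<sigma> S1 = [1..<n+1]"
    and S2: "subst \<sigma> S2 = rev [1..<n+1]" and D: "subst \<sigma> D = []" and z: "\<sigma> z = [0]"
  obtains p q where "subst (collapse z p q) s = replicate (Suc (count_list P z)) 0 @ [1, 0, 2, 0]"
proof -
  have "card (set S1) \<le> card (set s)" "card (set S2) \<le> card (set s)"
    using s by (auto intro: card_mono)
  then have card_S: "card (set S1) < length [1..<n+1]" "card (set S2) < length (rev [1..<n+1])"
    using card by simp_all
  obtain p where p: "p \<in> set S1" "length (\<sigma> p) \<ge> 2" "count_list S1 p = 1"
    using exists_long_image[OF S1 distinct_upt card_S(1)] by blast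
  obtain q where q: "q \<in> set S2" "length (\<sigma> q) \<ge> 2" "count_list S2 q = 1"
    using exists_long_image[OF S2 _ card_S(2)] distinct_upt distinct_rev by blast
  have "set (\<sigma> p) \<subseteq> {1..n}" "set (\<sigma> q) \<subseteq> {1..n}"
    using set_subst_subset[OF p(1), of \<sigma>] set_subst_subset[OF q(1), of \<sigma>] S1 S2 by auto
  moreover have "\<sigma> p \<noteq> []" "\<sigma> q \<noteq> []"
    using p(2) q(2) by auto
  ultimately have "p \<notin> set P \<and> q \<notin> set P \<and> p \<notin> set D \<and> q \<notin> set D"
    using P D by (intro conjI notin_if_disjoint_subst[of \<sigma>]) auto
  moreover have "z \<notin> set S1 \<and> z \<notin> set S2 \<and> z \<notin> set D"
    using S1 S2 D z by (intro conjI notin_if_disjoint_subst[of \<sigma>]) auto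
  moreover have "p \<notin> set S2 \<and> q \<notin> set S1"
    using shared_preimage_variable_length_le_1[OF S1 S2] p(1,2) q(1,2) by fastforce
  ultimately have "subst (collapse z p q) s = replicate (Suc (count_list P z)) 0 @ [1, 0, 2, 0]"
    unfolding s using p(3) q(3) by (intro subst_collapse_blocks) simp_all
  then show thesis
    by (rule that)
qed

locale nfb_conditions =
  fixes S :: "'a::monoid_mult itself" and m :: nat
  assumes m_ge_3: "m \<ge> 3"
    and xyyx: "isoterm S [0, 1, 1, 0]"
    and power: "isoterm S (replicate (m - 1) 0)"
    and xt1xt2x: "isoterm S (replicate (m - 2) 0 @ [1, 0, 2, 0])"
    and xyxy: "isoterm_with_count S 0 m (replicate (m - 2) 0 @ [1, 0, 1, 0])"
begin

lemma filter_x_yi_eq_if_satisfies_word_i: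
  assumes sat: "satisfies S (word_i (m - 2) n) u" and cnt: "count_list u 0 = m"
    and i: "1 \<le> i" "i \<le> n"
  shows "filter (\<lambda>x. x = 0 \<or> x = i) u = filter (\<lambda>x. x = 0 \<or> x = i) (word_i (m - 2) n)"
proof -
  let ?xyxy = "replicate (m - 2) 0 @ [1, 0, 1, 0]" and ?f = "\<lambda>v. if v = 0 then 0 else i"
    and ?u = "filter (\<lambda>x. x = 0 \<or> x = i) u"
  have "inj_on ?f (set ?xyxy)"
    using i by (auto simp: inj_on_def)
  from isoterm_with_count_map[OF power xyxy this]
  have iso: "isoterm_with_count S 0 m (replicate (m - 2) 0 @ [i, 0, i, 0])"
    using i by simp
  have cnt_u: "count_list ?u 0 = m"
    using cnt by (simp add: count_list_filter)
  then have "is_word ?u"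
    using m_ge_3 by (auto simp: is_word_def)
  moreover have "satisfies S ?u (replicate (m - 2) 0 @ [i, 0, i, 0])"
    using satisfies_sym[OF satisfies_filter[OF sat, of "\<lambda>x. x = 0 \<or> x = i"]]
    by (simp only: filter_word_i_0[OF i])
  ultimately show ?thesis
    using iso cnt_u filter_word_i_0[OF i] unfolding isoterm_with_count_def by metis
qed

lemma filter_yi_yj_eq_if_satisfies_word_i:
  assumes sat: "satisfies S (word_i (m - 2) n) u" and ij: "1 \<le> i" "i < j" "j \<le> n"
  shows "filter (\<lambda>x. x = i \<or> x = j) u = filter (\<lambda>x. x = i \<or> x = j) (word_i (m - 2) n)"
proof -
  let ?f = "\<lambda>v. if v = 0 then i else j" and ?u = "filter (\<lambda>x. x = i \<or> x = j) u"
  have "inj_on ?f (set [0, 1, 1, 0])"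
    using ij by (auto simp: inj_on_def)
  from isoterm_map[OF power xyyx this]
  have iso: "isoterm S [i, j, j, i]"
    by simp
  have sat_ij: "satisfies S [i, j, j, i] ?u"
    using satisfies_filter[OF sat, of "\<lambda>x. x = i \<or> x = j"] by (simp only: filter_word_i_pair[OF ij])
  then have "is_word ?u"
    using satisfies_Nil_imp_Nil[OF power, of "[i, j, j, i]"] by (auto simp: is_word_def)
  then show ?thesis
    using iso sat_ij filter_word_i_pair[OF ij] unfolding isoterm_def by metis
qed

lemma count_list_eq_if_satisfies_word_i:
  assumes sat: "satisfies S (word_i (m - 2) n) u" and cnt: "count_list u 0 = m"
  shows "count_list u c = count_list (word_i (m - 2) n) c"
proof (cases "c = 0")
  case True
  then show ?thesis
    using cnt count_list_word_i_0[of "m - 2" n] m_ge_3 by simp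
next
  case False
  then have "count_list (word_i (m - 2) n) c \<le> 2"
    by (rule count_list_word_i_le_2)
  then have "count_list (word_i (m - 2) n) c \<le> m - 1"
    using m_ge_3 by linarith
  then show ?thesis
    by (rule satisfies_count_list_eq[OF power sat])
qed

lemma eq_word_i_if_satisfies:
  assumes sat: "satisfies S (word_i (m - 2) n) u" and cnt: "count_list u 0 = m"
  shows "u = word_i (m - 2) n"
proof (rule list_eq_if_pair_filters_eq)
  let ?w = "word_i (m - 2) n" and ?F = "\<lambda>c d. filter (\<lambda>x. x = c \<or> x = d)"
  have single: "?F c c u = ?F c c ?w" for c
    using count_list_eq_if_satisfies_word_i[OF sat cnt] by (simp add: filter_eq_replicate)
  have comm: "?F c d = ?F d c" for c d
    by (rule ext, rule filter_cong) auto
  have pair: "?F c d u = ?F c d ?w" if "c < d" "d \<le> n" for c d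
  proof (cases "c = 0")
    case True
    then show ?thesis
      using filter_x_yi_eq_if_satisfies_word_i[OF sat cnt, of d] that by simp
  next
    case False
    then show ?thesis
      using filter_yi_yj_eq_if_satisfies_word_i[OF sat, of c d] that by simp
  qed
  have "set u \<union> set ?w = insert 0 {1..n}"
    using satisfies_set_eq[OF power sat] by (simp add: set_word_i)
  fix c d assume "c \<in> set u \<union> set ?w" "d \<in> set u \<union> set ?w"
  then have "c \<le> n" "d \<le> n"
    using \<open>set u \<union> set ?w = insert 0 {1..n}\<close> by auto
  show "?F c d u = ?F c d ?w"
  proof (cases c d rule: linorder_cases)
    case less
    then show ?thesis using \<open>d \<le> n\<close> by (rule pair)
  next
    case equal
    then show ?thesis using single by simp
  next
    case greater
    then have "?F d c u = ?F d c ?w" using \<open>c \<le> n\<close> by (rule pair)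
    then show ?thesis by (simp only: comm[of c d])
  qed
qed

lemma count_list_sole_x_variable_eq:
  assumes st: "satisfies S s t" and card: "card (set s) < n"
    and eq: "subst \<sigma> s = word_i (m - 2) n" and z: "\<sigma> z = [0]"
    and free: "\<forall>v\<in>set s. v \<noteq> z \<longrightarrow> 0 \<notin> set (\<sigma> v)"
  shows "count_list t z = count_list s z"
proof -
  have m2: "m - 2 = Suc (m - 3)"
    using m_ge_3 by simp
  with eq have "subst \<sigma> s = word_i (Suc (m - 3)) n"
    by simp
  then obtain P S1 S2 D where s: "s = P @ z # S1 @ z # S2 @ z # D"
    and P: "subst \<sigma> P = replicate (m - 3) 0" and S1: "subst \<sigma> S1 = [1..<n+1]"
    and S2: "subst \<sigma> S2 = rev [1..<n+1]" and D: "subst \<sigma> D = []"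
    by (rule word_i_preimage[OF free z])
  obtain p q where col: "subst (collapse z p q) s = replicate (Suc (count_list P z)) 0 @ [1, 0, 2, 0]"
    using collapse_word_i_preimage[OF s card P S1 S2 D z] by blast
  have "count_list P z = count_list (subst \<sigma> P) 0"
    using free s z by (intro count_list_subst_sole_carrier[symmetric]) simp_all
  then have col': "subst (collapse z p q) s = replicate (m - 2) 0 @ [1, 0, 2, 0]"
    using col P m2 by simp
  have sat: "satisfies S (replicate (m - 2) 0 @ [1, 0, 2, 0]) (subst (collapse z p q) t)"
    using satisfies_subst[OF st] col' by metis
  then have "is_word (subst (collapse z p q) t)"
    using satisfies_Nil_imp_Nil[OF power] by (fastforce simp: is_word_def)
  then have "subst (collapse z p q) t = subst (collapse z p q) s"
    using xt1xt2x sat col' unfolding isoterm_def by metis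
  then show ?thesis
    by (metis count_list_subst_collapse)
qed

lemma count_list_x_subst_eq:
  assumes st: "satisfies S s t" and card: "card (set s) < n"
    and eq: "a @ subst \<sigma> s @ b = word_i (m - 2) n"
  shows "count_list (subst \<sigma> t) 0 = count_list (subst \<sigma> s) 0"
proof -
  have "count_list t v * count_list (\<sigma> v) 0 = count_list s v * count_list (\<sigma> v) 0"
    if "v \<in> set s" for v
  proof (cases "count_list s v \<le> m - 1 \<or> 0 \<notin> set (\<sigma> v)")
    case True
    then show ?thesis
      using satisfies_count_list_eq[OF power st] by (auto simp: count_list_0_iff)
  next
    case False
    then have many: "count_list s v \<ge> (m - 2) + 2" and x: "0 \<in> set (\<sigma> v)"
      using m_ge_3 by auto
    have k: "m - 2 \<ge> 1"
      using m_ge_3 by simp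
    note sole = word_i_sole_x_variable[OF eq k many x]
    have "count_list t v = count_list s v"
      using count_list_sole_x_variable_eq[OF st card _ sole(2,3)] eq sole(1) by simp
    then show ?thesis
      by simp
  qed
  then show ?thesis
    unfolding count_list_subst satisfies_set_eq[OF power st, symmetric]
    by (rule sum.cong[OF HOL.refl]) \<comment> \<open>plain \<open>refl\<close> is the rule of \<open>derivable\<close>\<close>
qed

lemma word_i_isolated:
  assumes st: "satisfies S s t" and card: "card (set s) < n"
    and eq: "a @ subst \<sigma> s @ b = word_i (m - 2) n"
  shows "a @ subst \<sigma> t @ b = word_i (m - 2) n"
proof (rule eq_word_i_if_satisfies)
  show "satisfies S (word_i (m - 2) n) (a @ subst \<sigma> t @ b)"
    using satisfies_append[OF satisfies_subst[OF st]] eq by metis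
  have "count_list (word_i (m - 2) n) 0 = m"
    using count_list_word_i_0[of "m - 2" n] m_ge_3 by simp
  then show "count_list (a @ subst \<sigma> t @ b) 0 = m"
    using count_list_x_subst_eq[OF st card eq] eq by (metis count_list_append)
qed

end

lemma derivable_preserves_isolated:
  assumes "derivable \<Sigma> u v"
    and "\<And>s t a \<sigma> b. (s, t) \<in> \<Sigma> \<Longrightarrow> a @ subst \<sigma> s @ b = w \<longleftrightarrow> a @ subst \<sigma> t @ b = w"
  shows "u = w \<longleftrightarrow> v = w"
  using assms by (induction rule: derivable.induct) auto

lemma not_finitely_based_if_isolated:
  fixes S :: "'a::monoid_mult itself" and u v :: "nat \<Rightarrow> word"
  assumes sat: "\<And>n. n > 1 \<Longrightarrow> satisfies S (u n) (v n)"
    and words: "\<And>n. is_word (u n)" "\<And>n. is_word (v n)" and neq: "\<And>n. u n \<noteq> v n"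
    and isolated: "\<And>n s t a \<sigma> b. satisfies S s t \<Longrightarrow> card (set s) < n \<Longrightarrow>
                      a @ subst \<sigma> s @ b = u n \<Longrightarrow> a @ subst \<sigma> t @ b = u n"
  shows "\<not> finitely_based S"
proof
  assume "finitely_based S"
  then obtain \<Sigma> where fin: "finite \<Sigma>" and sound: "\<forall>(s, t) \<in> \<Sigma>. satisfies S s t"
    and complete: "\<forall>u v. is_word u \<longrightarrow> is_word v \<longrightarrow> satisfies S u v \<longrightarrow> derivable \<Sigma> u v"
    unfolding finitely_based_def by blast
  define n where "n = Suc (Suc (Max (insert 0 ((\<lambda>(s, t). card (set s) + card (set t)) ` \<Sigma>))))"
  have small: "card (set s) < n \<and> card (set t) < n" if "(s, t) \<in> \<Sigma>" for s t
  proof -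
    have "card (set s) + card (set t) \<le> Max (insert 0 ((\<lambda>(s, t). card (set s) + card (set t)) ` \<Sigma>))"
      using fin that by (intro Max_ge) force+
    then show ?thesis
      unfolding n_def by linarith
  qed
  have "a @ subst \<sigma> s @ b = u n \<longleftrightarrow> a @ subst \<sigma> t @ b = u n" if "(s, t) \<in> \<Sigma>" for s t a \<sigma> b
    using isolated sound small[OF that] that satisfies_sym by fast
  moreover have "derivable \<Sigma> (u n) (v n)"
    using complete words sat[of n] by (simp add: n_def)
  ultimately show False
    using derivable_preserves_isolated neq by metis
qed

theorem theorem6p3:
  fixes S :: "'a::monoid_mult itself" and m :: nat
  assumes m3: "m \<ge> 3"
    and i: "\<And>n. n > 1 \<Longrightarrow> satisfies S (word_i (m - 2) n) (word_i (m - 1) n)"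
    and ii1: "isoterm S [0, 1, 1, 0]"
    and ii2: "isoterm S (replicate (m - 1) 0)"
    and iii: "isoterm S (replicate (m - 2) 0 @ [1, 0, 2, 0])"
    and iv: "\<And>u. is_word u \<Longrightarrow> satisfies S u (replicate (m - 2) 0 @ [1, 0, 1, 0]) \<Longrightarrow>
               count_list u 0 = m \<Longrightarrow> u = replicate (m - 2) 0 @ [1, 0, 1, 0]"
  shows "\<not> finitely_based S"
proof -
  interpret nfb_conditions S m
    using m3 ii1 ii2 iii iv by unfold_locales (simp_all add: isoterm_with_count_def)
  show ?thesis
  proof (rule not_finitely_based_if_isolated)
    show "satisfies S (word_i (m - 2) n) (word_i (m - 1) n)" if "n > 1" for n
      using that by (rule i)
    show "is_word (word_i (m - 2) n)" "is_word (word_i (m - 1) n)" for n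
      by (simp_all add: is_word_def word_i_def)
    show "word_i (m - 2) n \<noteq> word_i (m - 1) n" for n
      using m3 arg_cong[of _ _ length] by (fastforce simp: word_i_def)
  qed (fact word_i_isolated)
qed

end
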